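(* Let $G$ be a connected undirected simple graph on $n$ vertices with edge set $\mathcal E$ and nominal positive edge weights $\{\omega_{0,ij}\}_{\{i,j\}\in\mathcal E}$, with Laplacian $L_0$. For each edge let $\alpha_{\omega_{ij}}\in[0,1)$, and let $L$ be the Laplacian of the same graph with weights $\omega_{ij}$ satisfying $(1-\alpha_{\omega_{ij}})\omega_{0,ij}\le\omega_{ij}\le(1+\alpha_{\omega_{ij}})\omega_{0,ij}$. Put $\Delta=\sum_{\{i,j\}\in\mathcal E}\alpha_{\omega_{ij}}\omega_{0,ij}(e_i-e_j)(e_i-e_j)^\top$ and $a=\|L_0^\dagger\Delta\|$ (spectral norm), and assume $a<1$. Then $$(1-a)L_0\preceq L\preceq(1+a)L_0,$$ and, with zero time delay, the steady-state covariances $\Sigma=\frac12b^2L^\dagger$ and $\Sigma_0=\frac12b^2L_0^\dagger$ (same $b$) satisfy $(1-\varepsilon_\omega^-)\Sigma_0\preceq\Sigma\preceq(1+\varepsilon_\omega^+)\Sigma_0$, where $\varepsilon_\omega^-=\frac{\|\Delta L_0^\dagger\|}{1+\|\Delta L_0^\dagger\|}$ and $\varepsilon_\omega^+=\frac{\|\Delta L_0^\dagger\|}{1-\|\Delta L_0^\dagger\|}$.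
   Context: The Laplacian of a weighted graph with weights $\omega_{ij}$ is $L=\sum_{\{i,j\}\in\mathcal E}\omega_{ij}(e_i-e_j)(e_i-e_j)^\top$, where $e_k$ are standard basis vectors. $L^\dagger$ is the Moore–Penrose pseudoinverse. For zero delay, the network $\mathrm dx_t=-Lx_t\,\mathrm dt+b\,\mathrm dw_t$ ($w_t$ standard Brownian motion, $b\neq0$) has observables $y=(I_n-\frac1n\mathbf 1\mathbf 1^\top)x$ with steady-state law $\mathcal N(0,\frac12b^2L^\dagger)$. $A\preceq B$ means $B-A$ is positive semidefinite. *)

theory Defs
  imports "HOL-Analysis.Analysis"
begin

text \<open>Vertices are the elements of a finite type 'n (so n = CARD('n)).
  An undirected simple graph is a set E of 2-element vertex sets.\<close>

definition simple_graph :: "'n set set \<Rightarrow> bool" where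
  "simple_graph E \<longleftrightarrow> (\<forall>e\<in>E. card e = 2)"

definition graph_connected :: "'n set set \<Rightarrow> bool" where
  "graph_connected E \<longleftrightarrow> (\<forall>u v. (u, v) \<in> {(x, y). {x, y} \<in> E}\<^sup>*)"

definition outer :: "real^'n \<Rightarrow> real^'n \<Rightarrow> real^'n^'n" where
  "outer u v = (\<chi> k l. u $ k * v $ l)"

text \<open>For an edge e = {i,j}, the matrix (e_i - e_j)(e_i - e_j)^T
  (independent of the order of i and j).\<close>
definition edge_mat :: "'n::finite set \<Rightarrow> real^'n^'n" where
  "edge_mat e = (THE M. \<exists>i j. e = {i, j} \<and>
      M = outer (axis i 1 - axis j 1) (axis i 1 - axis j 1))"

definition laplacian :: "'n::finite set set \<Rightarrow> ('n set \<Rightarrow> real) \<Rightarrow> real^'n^'n" where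
  "laplacian E w = (\<Sum>e\<in>E. w e *\<^sub>R edge_mat e)"

definition penrose :: "real^'n^'n \<Rightarrow> real^'n^'n \<Rightarrow> bool" where
  "penrose A X \<longleftrightarrow> A ** X ** A = A \<and> X ** A ** X = X \<and>
     transpose (A ** X) = A ** X \<and> transpose (X ** A) = X ** A"

definition pinv :: "real^'n^'n \<Rightarrow> real^'n^'n" where
  "pinv A = (THE X. penrose A X)"

definition spec_norm :: "real^'n^'n \<Rightarrow> real" where
  "spec_norm A = onorm (\<lambda>x. A *v x)"

definition psd :: "real^'n^'n \<Rightarrow> bool" where
  "psd M \<longleftrightarrow> transpose M = M \<and> (\<forall>x. 0 \<le> x \<bullet> (M *v x))"

definition loewner_le :: "real^'n^'n \<Rightarrow> real^'n^'n \<Rightarrow> bool" where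
  "loewner_le A B \<longleftrightarrow> psd (B - A)"

end

theory Submission
  imports Defs
begin

(* Edgewise, (1 - alpha) w0 <= w <= (1 + alpha) w0 gives L0 - Delta <= L <= L0 + Delta in the
   Loewner order. Since L0 L0^+ Delta = Delta, the matrix T = L0^+ Delta is self-adjoint for the
   semi-inner product x . L0 y, so x . Delta x = x . L0 T x <= rho(T) x . L0 x <= a x . L0 x;
   this is the bound Delta <= a L0 and yields the Laplacian sandwich. Pseudoinversion reverses
   the Loewner order on psd matrices whose kernel is spanned by the all-ones vector, because
   x . K^+ x is the maximum of 2 y . x - y . K y over y orthogonal to that vector; together with
   (c K)^+ = K^+ / c this gives L0^+ / (1 + a) <= L^+ <= L0^+ / (1 - a). Finally
   norm (Delta L0^+) = norm ((L0^+ Delta)^T) = a, and 1 - a/(1 + a) = 1/(1 + a),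
   1 + a/(1 - a) = 1/(1 - a). *)

lemma inner_matrix_vector_transpose: "(x::real^'n) \<bullet> (A *v y) = (transpose A *v x) \<bullet> y"
  by (simp add: dot_lmul_matrix)

lemma symmetric_inner_commute:
  "transpose A = A \<Longrightarrow> (x::real^'n) \<bullet> (A *v y) = y \<bullet> (A *v x)"
  by (metis inner_matrix_vector_transpose inner_commute)

lemma transpose_add: "transpose (A + B) = transpose A + transpose (B::'a::semiring_1^'n^'m)"
  by (simp add: transpose_def vec_eq_iff)

lemma transpose_diff: "transpose (A - B) = transpose A - transpose (B::'a::ring_1^'n^'m)"
  by (simp add: transpose_def vec_eq_iff)

lemma matrix_add_rdistrib: "(A + B) ** C = A ** C + B ** (C::'a::semiring_1^'p^'n)"
  by (vector matrix_matrix_mult_def sum.distrib[symmetric] field_simps)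

lemma matrix_diff_ldistrib: "A ** (B - C) = A ** B - A ** (C::'a::ring_1^'p^'n)"
  by (vector matrix_matrix_mult_def sum_subtractf[symmetric] field_simps)

lemma matrix_diff_rdistrib: "(A - B) ** C = A ** C - B ** (C::'a::ring_1^'p^'n)"
  by (vector matrix_matrix_mult_def sum_subtractf[symmetric] field_simps)

lemma transpose_right_inverse_symmetric:
  fixes M M' :: "real^'n^'n"
  assumes "transpose M = M" and "M ** M' = mat 1"
  shows "transpose M' = M'"
proof -
  have "transpose M' = transpose M' ** (M ** M')" by (simp add: assms(2))
  also have "\<dots> = transpose (M ** M') ** M'"
    by (simp only: matrix_mul_assoc matrix_transpose_mul assms(1))
  also have "\<dots> = M'" by (simp add: assms(2))
  finally show ?thesis .
qed

section \<open>Positive semidefinite matrices and the Loewner order\<close>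

lemma psd_add: "psd A \<Longrightarrow> psd B \<Longrightarrow> psd (A + B)"
  by (simp add: psd_def transpose_add matrix_vector_mult_add_rdistrib inner_add_right add_nonneg_nonneg)

lemma psd_scaleR: "0 \<le> c \<Longrightarrow> psd A \<Longrightarrow> psd (c *\<^sub>R A)"
  by (simp add: psd_def transpose_scalar scaleR_matrix_vector_assoc[symmetric])

lemma loewner_leI:
  assumes "transpose A = A" "transpose B = B" "\<And>x. x \<bullet> (A *v x) \<le> x \<bullet> (B *v x)"
  shows "loewner_le A B"
  using assms
  by (simp add: loewner_le_def psd_def transpose_diff matrix_vector_mult_diff_rdistrib
      inner_diff_right)

lemma loewner_le_quadratic: "loewner_le A B \<Longrightarrow> x \<bullet> (A *v x) \<le> x \<bullet> (B *v x)"
  unfolding loewner_le_def psd_def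
  by (metis diff_ge_0_iff_ge inner_diff_right matrix_vector_mult_diff_rdistrib)

lemma loewner_le_trans [trans]:
  assumes "loewner_le A B" "loewner_le B C"
  shows "loewner_le A C"
proof -
  have "C - A = (C - B) + (B - A)" by simp
  then show ?thesis
    using assms unfolding loewner_le_def by (metis psd_add)
qed

lemma loewner_le_diff_left: "loewner_le A B \<Longrightarrow> loewner_le (C - B) (C - A)"
  by (simp add: loewner_le_def)

lemma loewner_le_add_left: "loewner_le A B \<Longrightarrow> loewner_le (C + A) (C + B)"
  by (simp add: loewner_le_def)

lemma loewner_le_scaleR: "0 \<le> c \<Longrightarrow> loewner_le A B \<Longrightarrow> loewner_le (c *\<^sub>R A) (c *\<^sub>R B)"
  by (simp add: loewner_le_def psd_scaleR flip: scaleR_diff_right)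

lemma nonneg_quadratic_discriminant:
  fixes A B C :: real
  assumes C: "0 \<le> C" and nonneg: "\<And>t. 0 \<le> A + 2 * t * B + t\<^sup>2 * C"
  shows "B\<^sup>2 \<le> A * C"
proof (cases "C = 0")
  case True
  have "B = 0"
  proof (rule ccontr)
    assume "B \<noteq> 0"
    have "0 \<le> A + 2 * (- (A + 1) / (2 * B)) * B + (- (A + 1) / (2 * B))\<^sup>2 * C" by (rule nonneg)
    also have "\<dots> = -1" using True \<open>B \<noteq> 0\<close> by (simp add: field_simps)
    finally show False by simp
  qed
  then show ?thesis using True by simp
next
  case False
  then have "0 < C" using C by simp
  have "0 \<le> A + 2 * (- B / C) * B + (- B / C)\<^sup>2 * C" by (rule nonneg)
  also have "\<dots> = A - B\<^sup>2 / C" using \<open>0 < C\<close> by (simp add: field_simps power2_eq_square)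
  finally show ?thesis using \<open>0 < C\<close> by (simp add: field_simps)
qed

lemma psd_cauchy_schwarz:
  assumes "psd K"
  shows "(u \<bullet> (K *v v))\<^sup>2 \<le> (u \<bullet> (K *v u)) * (v \<bullet> (K *v v))"
proof (rule nonneg_quadratic_discriminant)
  have sym: "transpose K = K" and nonneg: "\<And>x. 0 \<le> x \<bullet> (K *v x)"
    using assms by (auto simp: psd_def)
  show "0 \<le> v \<bullet> (K *v v)" by (rule nonneg)
  fix t :: real
  have "0 \<le> (u + t *\<^sub>R v) \<bullet> (K *v (u + t *\<^sub>R v))" by (rule nonneg)
  also have "\<dots> = u \<bullet> (K *v u) + t * (v \<bullet> (K *v u)) + t * (u \<bullet> (K *v v)) + t\<^sup>2 * (v \<bullet> (K *v v))"
    by (simp add: matrix_vector_right_distrib matrix_vector_mult_scaleR inner_add_left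
        inner_add_right algebra_simps power2_eq_square)
  also have "v \<bullet> (K *v u) = u \<bullet> (K *v v)" by (rule symmetric_inner_commute[OF sym])
  finally show "0 \<le> u \<bullet> (K *v u) + 2 * t * (u \<bullet> (K *v v)) + t\<^sup>2 * (v \<bullet> (K *v v))"
    by (simp add: algebra_simps)
qed

section \<open>Moore--Penrose pseudoinverse\<close>

lemma penrose_unique:
  assumes X: "penrose A X" and Y: "penrose A Y"
  shows "X = Y"
proof -
  have x: "A ** X ** A = A" "X ** A ** X = X" "transpose (A ** X) = A ** X" "transpose (X ** A) = X ** A"
    using X by (auto simp: penrose_def)
  have y: "A ** Y ** A = A" "Y ** A ** Y = Y" "transpose (A ** Y) = A ** Y" "transpose (Y ** A) = Y ** A"
    using Y by (auto simp: penrose_def)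
  have "X = X ** transpose (A ** X)" using x by (simp add: matrix_mul_assoc)
  also have "\<dots> = X ** transpose (A ** Y ** A ** X)" by (simp add: y(1))
  also have "\<dots> = X ** transpose (A ** X) ** transpose (A ** Y)"
    by (simp add: matrix_transpose_mul matrix_mul_assoc)
  also have "\<dots> = X ** A ** Y" using x y by (simp add: matrix_mul_assoc)
  finally have XAY: "X = X ** A ** Y" .
  have "Y = transpose (Y ** A) ** Y" using y by simp
  also have "\<dots> = transpose (Y ** A ** X ** A) ** Y" by (metis x(1) matrix_mul_assoc)
  also have "\<dots> = transpose (X ** A) ** transpose (Y ** A) ** Y"
    by (simp add: matrix_transpose_mul matrix_mul_assoc)
  also have "\<dots> = X ** A ** (Y ** A ** Y)" by (simp only: x(4) y(4) matrix_mul_assoc)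
  also have "\<dots> = X ** A ** Y" using y by simp
  finally show ?thesis using XAY by simp
qed

lemma pinv_eqI:
  assumes "penrose A X"
  shows "pinv A = X"
  unfolding pinv_def by (rule the_equality[of "penrose A", OF assms]) (rule penrose_unique[OF _ assms])

lemma matrix_mult_scaleR_left: "(c *\<^sub>R A) ** B = c *\<^sub>R (A ** B :: real^'n^'m)"
  by (simp add: matrix_matrix_mult_def vec_eq_iff sum_distrib_left ac_simps)

lemma matrix_mult_scaleR_right: "A ** (c *\<^sub>R B) = c *\<^sub>R (A ** B :: real^'n^'m)"
  by (simp add: matrix_matrix_mult_def vec_eq_iff sum_distrib_left ac_simps)

lemma penrose_scaleR: "penrose A X \<Longrightarrow> c \<noteq> 0 \<Longrightarrow> penrose (c *\<^sub>R A) (inverse c *\<^sub>R X)"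
  by (simp add: penrose_def transpose_scalar matrix_mult_scaleR_left matrix_mult_scaleR_right)

lemma pinv_scaleR:
  assumes "penrose A (pinv A)" "c \<noteq> 0"
  shows "pinv (c *\<^sub>R A) = inverse c *\<^sub>R pinv A"
  by (rule pinv_eqI[OF penrose_scaleR[OF assms]])

definition ones_proj :: "real^'n^'n" where
  "ones_proj = (\<chi> i j. inverse (real CARD('n)))"

lemma ones_proj_vector: "ones_proj *v x = ((1 \<bullet> x) / real CARD('n)) *\<^sub>R (1::real^'n)"
  by (simp add: ones_proj_def matrix_vector_mult_def inner_vec_def vec_eq_iff
      sum_distrib_left field_simps)

lemma transpose_ones_proj: "transpose ones_proj = ones_proj"
  by (simp add: ones_proj_def transpose_def)

lemma ones_proj_idem: "ones_proj ** ones_proj = ones_proj"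
  by (simp add: ones_proj_def matrix_matrix_mult_def vec_eq_iff)

lemma matrix_mult_ones_proj: "A *v 1 = 0 \<Longrightarrow> A ** ones_proj = 0"
  by (simp add: ones_proj_def matrix_matrix_mult_def matrix_vector_mult_def vec_eq_iff
      flip: sum_distrib_right)

lemma ones_proj_mult_matrix:
  assumes "transpose A = A" "A *v 1 = 0"
  shows "ones_proj ** A = 0"
proof -
  have "ones_proj ** A = transpose (A ** ones_proj)"
    by (simp add: matrix_transpose_mul transpose_ones_proj assms(1))
  then show ?thesis by (simp add: matrix_mult_ones_proj[OF assms(2)] transpose_def vec_eq_iff)
qed

definition psd_kernel_ones :: "real^'n^'n \<Rightarrow> bool" where
  "psd_kernel_ones K \<longleftrightarrow>
     psd K \<and> K *v 1 = 0 \<and> (\<forall>x. x \<bullet> (K *v x) = 0 \<longrightarrow> (\<exists>c. x = c *\<^sub>R 1))"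

lemma psd_kernel_ones_scaleR: "0 < c \<Longrightarrow> psd_kernel_ones K \<Longrightarrow> psd_kernel_ones (c *\<^sub>R K)"
  by (simp add: psd_kernel_ones_def psd_scaleR scaleR_matrix_vector_assoc[symmetric])

lemma invertible_add_ones_proj:
  fixes K :: "real^'n^'n"
  assumes "psd_kernel_ones K"
  shows "invertible (K + ones_proj)"
  unfolding invertible_left_inverse matrix_left_invertible_ker
proof (intro allI impI)
  fix x :: "real^'n"
  assume "(K + ones_proj) *v x = 0"
  then have "0 = x \<bullet> ((K + ones_proj) *v x)" by simp
  also have "\<dots> = x \<bullet> (K *v x) + (1 \<bullet> x)\<^sup>2 / real CARD('n)"
    by (simp add: matrix_vector_mult_add_rdistrib inner_add_right ones_proj_vector
        power2_eq_square inner_commute[of x 1])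
  finally have "x \<bullet> (K *v x) + (1 \<bullet> x)\<^sup>2 / real CARD('n) = 0" by simp
  moreover have "0 \<le> x \<bullet> (K *v x)" using assms by (simp add: psd_kernel_ones_def psd_def)
  ultimately have "x \<bullet> (K *v x) = 0" and "1 \<bullet> x = 0"
    by (simp_all add: add_nonneg_eq_0_iff)
  moreover obtain c where "x = c *\<^sub>R 1"
    using assms \<open>x \<bullet> (K *v x) = 0\<close> by (auto simp: psd_kernel_ones_def)
  ultimately show "x = 0" by (simp add: inner_vec_def)
qed

lemma penrose_psd_kernel_ones:
  fixes K :: "real^'n^'n"
  assumes K: "psd_kernel_ones K"
  shows "\<exists>X. penrose K X \<and> transpose X = X \<and> K ** X = mat 1 - ones_proj \<and> ones_proj ** X = 0"
proof -
  let ?Q = "ones_proj :: real^'n^'n"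
  define M where "M = K + ?Q"
  obtain M' where M'M: "M' ** M = mat 1" and MM': "M ** M' = mat 1"
    using invertible_add_ones_proj[OF K] by (auto simp: M_def invertible_def)
  have symK: "transpose K = K" and K1: "K *v 1 = 0"
    using K by (auto simp: psd_kernel_ones_def psd_def)
  have KQ: "K ** ?Q = 0" and QK: "?Q ** K = 0"
    using K1 symK by (simp_all add: matrix_mult_ones_proj ones_proj_mult_matrix)
  have K_eq: "K = M - ?Q" by (simp add: M_def)
  have MQ: "M ** ?Q = ?Q" by (simp add: M_def matrix_add_rdistrib KQ ones_proj_idem)
  have QM: "?Q ** M = ?Q" by (simp add: M_def matrix_add_ldistrib QK ones_proj_idem)
  have "M' ** ?Q = M' ** (M ** ?Q)" by (simp only: MQ)
  then have M'Q: "M' ** ?Q = ?Q" by (simp add: matrix_mul_assoc M'M)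
  have "?Q ** M' = (?Q ** M) ** M'" by (simp only: QM)
  then have QM': "?Q ** M' = ?Q" by (simp flip: matrix_mul_assoc add: MM')
  have symM': "transpose M' = M'"
    by (rule transpose_right_inverse_symmetric[OF _ MM'])
      (simp add: M_def transpose_add symK transpose_ones_proj)
  \<comment> \<open>the classical formula (L + 1 1^T / n)^-1 - 1 1^T / n for the pseudoinverse of a Laplacian\<close>
  define X where "X = M' - ?Q"
  have KX: "K ** X = mat 1 - ?Q"
    by (simp add: X_def K_eq matrix_diff_ldistrib matrix_diff_rdistrib MM' MQ QM' ones_proj_idem)
  have XK: "X ** K = mat 1 - ?Q"
    by (simp add: X_def K_eq matrix_diff_ldistrib matrix_diff_rdistrib M'M M'Q QM ones_proj_idem)
  have QX: "?Q ** X = 0"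
    by (simp add: X_def matrix_diff_ldistrib QM' ones_proj_idem)
  have symX: "transpose X = X"
    by (simp add: X_def transpose_diff symM' transpose_ones_proj)
  have "K ** X ** K = K" by (simp add: KX matrix_diff_rdistrib QK)
  moreover have "X ** K ** X = X" by (simp add: XK matrix_diff_rdistrib QX)
  moreover have "transpose (mat 1 - ?Q) = mat 1 - ?Q"
    by (simp add: transpose_diff transpose_ones_proj)
  ultimately have "penrose K X" by (simp add: penrose_def KX XK)
  with symX KX QX show ?thesis by (intro exI[of _ X] conjI)
qed

lemma pinv_psd_kernel_ones:
  assumes "psd_kernel_ones K"
  shows "penrose K (pinv K)" "transpose (pinv K) = pinv K"
    "K ** pinv K = mat 1 - ones_proj" "ones_proj ** pinv K = 0"
proof -
  obtain X where X: "penrose K X" "transpose X = X" "K ** X = mat 1 - ones_proj" "ones_proj ** X = 0"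
    using penrose_psd_kernel_ones[OF assms] by blast
  moreover have "pinv K = X" by (rule pinv_eqI[OF X(1)])
  ultimately show "penrose K (pinv K)" "transpose (pinv K) = pinv K"
    "K ** pinv K = mat 1 - ones_proj" "ones_proj ** pinv K = 0"
    by simp_all
qed

lemma pinv_variational:
  fixes K :: "real^'n^'n"
  assumes K: "psd_kernel_ones K"
  shows "ones_proj *v y = 0 \<Longrightarrow> 2 * (y \<bullet> x) - y \<bullet> (K *v y) \<le> x \<bullet> (pinv K *v x)"
    and "2 * ((pinv K *v x) \<bullet> x) - (pinv K *v x) \<bullet> (K *v (pinv K *v x)) = x \<bullet> (pinv K *v x)"
proof -
  have symK: "transpose K = K" and K_nonneg: "\<And>v. 0 \<le> v \<bullet> (K *v v)"
    using K by (auto simp: psd_kernel_ones_def psd_def)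
  define z where "z = pinv K *v x"
  have Kz: "K *v z = x - ones_proj *v x"
    by (simp add: z_def matrix_vector_mul_assoc pinv_psd_kernel_ones(3)[OF K]
        matrix_vector_mult_diff_rdistrib)
  have Qz: "ones_proj *v z = 0"
    by (simp add: z_def matrix_vector_mul_assoc pinv_psd_kernel_ones(4)[OF K])
  have centered: "v \<bullet> (K *v z) = v \<bullet> x" if "ones_proj *v v = 0" for v
    using that by (simp add: Kz inner_diff_right inner_matrix_vector_transpose transpose_ones_proj)
  show "2 * (z \<bullet> x) - z \<bullet> (K *v z) = x \<bullet> z"
    using centered[OF Qz] by (simp add: inner_commute)
  show "2 * (y \<bullet> x) - y \<bullet> (K *v y) \<le> x \<bullet> z" if "ones_proj *v y = 0"
  proof -
    have "0 \<le> (y - z) \<bullet> (K *v (y - z))" by (rule K_nonneg)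
    also have "\<dots> = y \<bullet> (K *v y) - 2 * (y \<bullet> (K *v z)) + z \<bullet> (K *v z)"
      by (simp add: matrix_vector_mult_diff_distrib inner_diff_left inner_diff_right
          symmetric_inner_commute[OF symK, of z y])
    also have "\<dots> = y \<bullet> (K *v y) - 2 * (y \<bullet> x) + x \<bullet> z"
      using centered[OF that] centered[OF Qz] by (simp add: inner_commute)
    finally show ?thesis by simp
  qed
qed

lemma pinv_antimono:
  fixes A B :: "real^'n^'n"
  assumes A: "psd_kernel_ones A" and B: "psd_kernel_ones B" and AB: "loewner_le A B"
  shows "loewner_le (pinv B) (pinv A)"
proof (rule loewner_leI)
  show "transpose (pinv B) = pinv B" "transpose (pinv A) = pinv A"
    using A B by (simp_all add: pinv_psd_kernel_ones)
  fix x :: "real^'n"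
  define y where "y = pinv B *v x"
  have "ones_proj *v y = 0"
    by (simp add: y_def matrix_vector_mul_assoc pinv_psd_kernel_ones(4)[OF B])
  have "x \<bullet> (pinv B *v x) = 2 * (y \<bullet> x) - y \<bullet> (B *v y)"
    using pinv_variational(2)[OF B, of x] by (simp add: y_def)
  also have "\<dots> \<le> 2 * (y \<bullet> x) - y \<bullet> (A *v y)"
    using loewner_le_quadratic[OF AB, of y] by simp
  also have "\<dots> \<le> x \<bullet> (pinv A *v x)"
    by (rule pinv_variational(1)[OF A \<open>ones_proj *v y = 0\<close>])
  finally show "x \<bullet> (pinv B *v x) \<le> x \<bullet> (pinv A *v x)" .
qed

lemma pinv_loewner_bounds:
  fixes K0 K :: "real^'n^'n"
  assumes K0: "psd_kernel_ones K0" and K: "psd_kernel_ones K" and "0 \<le> a" "a < 1"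
    and lower: "loewner_le ((1 - a) *\<^sub>R K0) K" and upper: "loewner_le K ((1 + a) *\<^sub>R K0)"
  shows "loewner_le (inverse (1 + a) *\<^sub>R pinv K0) (pinv K)"
    and "loewner_le (pinv K) (inverse (1 - a) *\<^sub>R pinv K0)"
proof -
  have "pinv (c *\<^sub>R K0) = inverse c *\<^sub>R pinv K0" if "c \<noteq> 0" for c
    by (rule pinv_scaleR[OF pinv_psd_kernel_ones(1)[OF K0] that])
  then show "loewner_le (inverse (1 + a) *\<^sub>R pinv K0) (pinv K)"
    and "loewner_le (pinv K) (inverse (1 - a) *\<^sub>R pinv K0)"
    using pinv_antimono[OF K psd_kernel_ones_scaleR[OF _ K0] upper]
      pinv_antimono[OF psd_kernel_ones_scaleR[OF _ K0] K lower] \<open>0 \<le> a\<close> \<open>a < 1\<close>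
    by simp_all
qed

section \<open>Spectral norm and Rayleigh quotients\<close>

lemma spec_norm_nonneg: "0 \<le> spec_norm A"
  unfolding spec_norm_def by (rule onorm_pos_le) simp

lemma norm_matrix_vector_le_spec_norm: "norm (A *v x) \<le> spec_norm A * norm x"
  unfolding spec_norm_def by (simp add: onorm)

lemma spec_norm_transpose_le: "spec_norm (transpose A) \<le> spec_norm (A::real^'n^'n)"
  unfolding spec_norm_def
proof (rule onorm_le)
  fix x :: "real^'n"
  let ?y = "transpose A *v x"
  have "norm ?y ^ 2 = x \<bullet> (A *v ?y)"
    by (simp add: power2_norm_eq_inner inner_matrix_vector_transpose[of x A])
  also have "\<dots> \<le> norm x * norm (A *v ?y)"
    by (rule norm_cauchy_schwarz)
  also have "\<dots> \<le> norm x * (spec_norm A * norm ?y)"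
    by (simp add: mult_left_mono norm_matrix_vector_le_spec_norm)
  finally have "norm ?y * norm ?y \<le> (spec_norm A * norm x) * norm ?y"
    by (simp add: power2_eq_square ac_simps)
  then have "norm ?y \<le> spec_norm A * norm x"
    using spec_norm_nonneg[of A] by (cases "norm ?y = 0") auto
  then show "norm ?y \<le> onorm ((*v) A) * norm x"
    by (simp add: spec_norm_def)
qed

lemma spec_norm_transpose: "spec_norm (transpose A) = spec_norm (A::real^'n^'n)"
  by (metis antisym spec_norm_transpose_le transpose_transpose)

lemma power_two_pow_le_imp_le:
  fixes r s C :: real
  assumes bound: "\<And>k. r ^ 2 ^ k \<le> C * s ^ 2 ^ k" and "0 \<le> s"
  shows "r \<le> s"
proof (rule ccontr)
  assume "\<not> r \<le> s"
  then have "s < r" by simp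
  show False
  proof (cases "s = 0")
    case True
    then show False using bound[of 0] \<open>s < r\<close> by simp
  next
    case False
    with \<open>0 \<le> s\<close> have "0 < s" by simp
    define \<rho> where "\<rho> = r / s"
    have "1 < \<rho>" using \<open>s < r\<close> \<open>0 < s\<close> by (simp add: \<rho>_def)
    have \<rho>_bound: "\<rho> ^ 2 ^ k \<le> C" for k
      using bound[of k] \<open>0 < s\<close> by (simp add: \<rho>_def power_divide pos_divide_le_eq)
    obtain n where "C < \<rho> ^ n" using real_arch_pow[OF \<open>1 < \<rho>\<close>] by blast
    moreover have "\<rho> ^ n \<le> \<rho> ^ 2 ^ n"
      using \<open>1 < \<rho>\<close> by (intro power_increasing) (auto intro: less_imp_le less_exp)
    ultimately show False using \<rho>_bound[of n] by simp
  qed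
qed

lemma norm_funpow_matrix_vector_le: "norm (((*v) T ^^ m) x) \<le> spec_norm T ^ m * norm x"
proof (induction m)
  case (Suc m)
  have "norm (((*v) T ^^ Suc m) x) \<le> spec_norm T * norm (((*v) T ^^ m) x)"
    by (simp add: norm_matrix_vector_le_spec_norm)
  also have "\<dots> \<le> spec_norm T * (spec_norm T ^ m * norm x)"
    by (rule mult_left_mono[OF Suc.IH spec_norm_nonneg])
  finally show ?case by (simp add: mult.assoc)
qed simp

lemma moment_le_growth_rate:
  fixes g :: "nat \<Rightarrow> real"
  assumes sq: "\<And>m. (g m)\<^sup>2 \<le> g 0 * g (2 * m)" and growth: "\<And>m. g m \<le> C * a ^ m"
    and "0 \<le> a" and "0 \<le> g 0"
  shows "g 1 \<le> a * g 0"
proof (cases "g 1 \<le> 0")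
  case True
  then show ?thesis using \<open>0 \<le> a\<close> \<open>0 \<le> g 0\<close> by (metis mult_nonneg_nonneg order.trans)
next
  case False
  have "g 0 \<noteq> 0"
  proof
    assume "g 0 = 0"
    then have "(g 1)\<^sup>2 \<le> 0" using sq[of 1] by simp
    moreover have "0 < (g 1)\<^sup>2" using False by simp
    ultimately show False by simp
  qed
  with \<open>0 \<le> g 0\<close> have "0 < g 0" by simp
  have chain: "g 1 ^ 2 ^ k \<le> g (2 ^ k) * g 0 ^ (2 ^ k - 1)" for k
  proof (induction k)
    case (Suc k)
    obtain p where p: "(2::nat) ^ k = Suc p" using not0_implies_Suc[of "(2::nat) ^ k"] by auto
    have "g 1 ^ 2 ^ Suc k = (g 1 ^ 2 ^ k)\<^sup>2" by (simp add: power_mult[symmetric] mult.commute)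
    also have "\<dots> \<le> (g (2 ^ k) * g 0 ^ (2 ^ k - 1))\<^sup>2"
      using False by (intro power_mono[OF Suc.IH]) simp
    also have "\<dots> = (g (2 ^ k))\<^sup>2 * (g 0 ^ (2 ^ k - 1))\<^sup>2" by (simp add: power_mult_distrib)
    also have "\<dots> \<le> (g 0 * g (2 * 2 ^ k)) * (g 0 ^ (2 ^ k - 1))\<^sup>2"
      by (rule mult_right_mono[OF sq]) simp
    also have "\<dots> = g (2 ^ Suc k) * g 0 ^ (2 ^ Suc k - 1)"
      by (simp add: p power_mult[symmetric] power_add ac_simps)
    finally show ?case .
  qed simp
  have "g 1 ^ 2 ^ k \<le> (C / g 0) * (a * g 0) ^ 2 ^ k" for k
  proof -
    have "g 1 ^ 2 ^ k \<le> (C * a ^ 2 ^ k) * g 0 ^ (2 ^ k - 1)"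
      using chain[of k] mult_right_mono[OF growth[of "2 ^ k"], of "g 0 ^ (2 ^ k - 1)"] \<open>0 \<le> g 0\<close>
      by simp
    also have "\<dots> = (C / g 0) * (a * g 0) ^ 2 ^ k"
      using \<open>0 < g 0\<close> by (simp add: power_diff power_mult_distrib field_simps)
    finally show ?thesis .
  qed
  then show ?thesis by (rule power_two_pow_le_imp_le) (simp add: \<open>0 \<le> a\<close> \<open>0 \<le> g 0\<close>)
qed

(* T is self-adjoint for the semi-inner product <u, v> = u . K v, which makes the moments
   <x, T^m x> satisfy the Cauchy-Schwarz squaring required by moment_le_growth_rate; their
   growth rate is at most the spectral radius of T, hence at most its norm. *)
lemma quadratic_form_psd_mult_le_spec_norm:
  fixes K T :: "real^'n^'n"
  assumes K: "psd K" and KT: "transpose (K ** T) = K ** T"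
  shows "x \<bullet> ((K ** T) *v x) \<le> spec_norm T * (x \<bullet> (K *v x))"
proof -
  have symK: "transpose K = K" and q_nonneg: "0 \<le> x \<bullet> (K *v x)"
    using K by (auto simp: psd_def)
  define g where "g m = x \<bullet> (K *v ((*v) T ^^ m) x)" for m
  have adjoint: "u \<bullet> (K *v (T *v v)) = (T *v u) \<bullet> (K *v v)" for u v
    using symmetric_inner_commute[OF KT, of u v] symmetric_inner_commute[OF symK, of "T *v u" v]
    by (simp add: matrix_vector_mul_assoc)
  have adjoint_pow: "u \<bullet> (K *v ((*v) T ^^ m) v) = (((*v) T ^^ m) u) \<bullet> (K *v v)" for m u v
  proof (induction m arbitrary: v)
    case (Suc m)
    then show ?case by (simp add: adjoint funpow_swap1[of "(*v) T"])
  qed simp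
  have sq: "(g m)\<^sup>2 \<le> g 0 * g (2 * m)" for m
  proof -
    have "(g m)\<^sup>2 \<le> g 0 * (((*v) T ^^ m) x \<bullet> (K *v ((*v) T ^^ m) x))"
      unfolding g_def by (simp add: psd_cauchy_schwarz[OF K])
    also have "\<dots> = g 0 * g (2 * m)"
      by (simp add: g_def adjoint_pow[symmetric] mult_2 funpow_add)
    finally show ?thesis .
  qed
  have growth: "g m \<le> (norm (K *v x) * norm x) * spec_norm T ^ m" for m
  proof -
    have "g m = (K *v x) \<bullet> ((*v) T ^^ m) x"
      by (simp add: g_def inner_matrix_vector_transpose symK)
    also have "\<dots> \<le> norm (K *v x) * (spec_norm T ^ m * norm x)"
      by (intro order.trans[OF norm_cauchy_schwarz] mult_left_mono norm_funpow_matrix_vector_le) simp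
    finally show ?thesis by (simp add: ac_simps)
  qed
  have "g 1 \<le> spec_norm T * g 0"
    by (rule moment_le_growth_rate[OF sq growth spec_norm_nonneg]) (simp add: g_def q_nonneg)
  then show ?thesis by (simp add: g_def matrix_vector_mul_assoc)
qed

lemma loewner_le_spec_norm_pinv_mult:
  fixes K D :: "real^'n^'n"
  assumes K: "psd_kernel_ones K" and symD: "transpose D = D" and D1: "D *v 1 = 0"
  shows "loewner_le D (spec_norm (pinv K ** D) *\<^sub>R K)"
proof -
  have psdK: "psd K" using K by (simp add: psd_kernel_ones_def)
  have KTD: "K ** (pinv K ** D) = D"
    by (simp add: matrix_mul_assoc pinv_psd_kernel_ones(3)[OF K] matrix_diff_rdistrib
        ones_proj_mult_matrix[OF symD D1])
  show ?thesis
  proof (rule loewner_leI)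
    show "transpose (spec_norm (pinv K ** D) *\<^sub>R K) = spec_norm (pinv K ** D) *\<^sub>R K"
      using psdK by (simp add: transpose_scalar psd_def)
    show "x \<bullet> (D *v x) \<le> x \<bullet> ((spec_norm (pinv K ** D) *\<^sub>R K) *v x)" for x
      using quadratic_form_psd_mult_le_spec_norm[OF psdK, of "pinv K ** D" x] symD
      by (simp add: KTD scaleR_matrix_vector_assoc[symmetric])
  qed (fact symD)
qed


section \<open>Graph Laplacians\<close>

lemma edge_mat_doubleton:
  "edge_mat {i, j} = outer (axis i 1 - axis j 1) (axis i 1 - axis j (1::real))"
  unfolding edge_mat_def
proof (rule the_equality)
  fix M
  assume "\<exists>i' j'. {i, j} = {i', j'} \<and> M = outer (axis i' 1 - axis j' 1) (axis i' 1 - axis j' 1)"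
  then obtain i' j' where "{i, j} = {i', j'}"
    and M: "M = outer (axis i' 1 - axis j' 1) (axis i' 1 - axis j' 1)"
    by blast
  then have "i' = i \<and> j' = j \<or> i' = j \<and> j' = i" by (auto simp: doubleton_eq_iff)
  then show "M = outer (axis i 1 - axis j 1) (axis i 1 - axis j 1)"
    using M by (auto simp: outer_def vec_eq_iff algebra_simps)
qed blast

lemma outer_mult_vector: "outer u v *v y = (v \<bullet> y) *\<^sub>R (u::real^'n)"
  by (simp add: vec_eq_iff outer_def matrix_vector_mult_def inner_vec_def sum_distrib_left ac_simps)

lemma edge_mat_doubleton_mult_vector:
  "edge_mat {i, j} *v y = (y $ i - y $ j) *\<^sub>R (axis i 1 - axis j (1::real))"
  by (simp add: edge_mat_doubleton outer_mult_vector inner_diff_left inner_axis')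

lemma inner_edge_mat_doubleton:
  "x \<bullet> (edge_mat {i, j} *v y) = (x $ i - x $ j) * (y $ i - y $ j)"
  by (simp add: edge_mat_doubleton_mult_vector inner_diff_right inner_axis)

lemma transpose_edge_mat_doubleton: "transpose (edge_mat {i, j}) = edge_mat {i, j}"
  by (simp add: edge_mat_doubleton outer_def transpose_def mult.commute)

lemma simple_graph_edgeE:
  assumes "simple_graph E" "e \<in> E"
  obtains i j where "e = {i, j}"
  using assms by (auto simp: simple_graph_def card_2_iff)

lemma matrix_vector_mult_sum: "(\<Sum>i\<in>S. f i) *v x = (\<Sum>i\<in>S. f i *v x)"
  by (induction S rule: infinite_finite_induct) (simp_all add: matrix_vector_mult_add_rdistrib)

lemma inner_laplacian:
  "x \<bullet> (laplacian E w *v y) = (\<Sum>e\<in>E. w e * (x \<bullet> (edge_mat e *v y)))"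
  by (simp add: laplacian_def matrix_vector_mult_sum inner_sum_right
      scaleR_matrix_vector_assoc[symmetric])

lemma laplacian_add: "laplacian E (\<lambda>e. f e + g e) = laplacian E f + laplacian E g"
  by (simp add: laplacian_def scaleR_add_left sum.distrib)

lemma laplacian_diff: "laplacian E (\<lambda>e. f e - g e) = laplacian E f - laplacian E g"
  by (simp add: laplacian_def scaleR_diff_left sum_subtractf)

lemma transpose_laplacian:
  assumes "simple_graph E"
  shows "transpose (laplacian E w) = laplacian E w"
proof -
  have "transpose (edge_mat e) = edge_mat e" if "e \<in> E" for e
    using simple_graph_edgeE[OF assms that] transpose_edge_mat_doubleton by metis
  then show ?thesis
    by (simp add: laplacian_def transpose_def vec_eq_iff)
qed

lemma laplacian_ones:
  assumes "simple_graph E"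
  shows "laplacian E w *v 1 = 0"
proof -
  have "edge_mat e *v 1 = 0" if "e \<in> E" for e
    using simple_graph_edgeE[OF assms that] by (metis edge_mat_doubleton_mult_vector one_index
        diff_self scaleR_zero_left)
  then show ?thesis
    by (simp add: laplacian_def matrix_vector_mult_sum scaleR_matrix_vector_assoc[symmetric])
qed

lemma psd_laplacian:
  fixes E :: "'n::finite set set"
  assumes "simple_graph E" and "\<forall>e\<in>E. 0 \<le> w e"
  shows "psd (laplacian E w)"
  unfolding psd_def
proof (intro conjI allI)
  show "transpose (laplacian E w) = laplacian E w" by (rule transpose_laplacian[OF assms(1)])
  fix x :: "real^'n"
  have "0 \<le> w e * (x \<bullet> (edge_mat e *v x))" if "e \<in> E" for e
    using simple_graph_edgeE[OF assms(1) that] assms(2) that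
    by (metis inner_edge_mat_doubleton mult_nonneg_nonneg zero_le_square)
  then show "0 \<le> x \<bullet> (laplacian E w *v x)"
    by (simp add: inner_laplacian sum_nonneg)
qed

lemma loewner_le_laplacian:
  assumes "simple_graph E" and "\<forall>e\<in>E. v e \<le> w e"
  shows "loewner_le (laplacian E v) (laplacian E w)"
  using psd_laplacian[OF assms(1), of "\<lambda>e. w e - v e"] assms(2)
  by (simp add: loewner_le_def laplacian_diff)

lemma psd_kernel_ones_laplacian:
  fixes E :: "'n::finite set set"
  assumes simple: "simple_graph E" and conn: "graph_connected E" and pos: "\<forall>e\<in>E. 0 < w e"
  shows "psd_kernel_ones (laplacian E w)"
  unfolding psd_kernel_ones_def
proof (intro conjI allI impI)
  show "psd (laplacian E w)" using psd_laplacian[OF simple] pos by (simp add: less_imp_le)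
  show "laplacian E w *v 1 = 0" by (rule laplacian_ones[OF simple])
  fix x :: "real^'n"
  assume "x \<bullet> (laplacian E w *v x) = 0"
  then have "(\<Sum>e\<in>E. w e * (x \<bullet> (edge_mat e *v x))) = 0" by (simp add: inner_laplacian)
  moreover have terms_nonneg: "0 \<le> w e * (x \<bullet> (edge_mat e *v x))" if "e \<in> E" for e
    using simple_graph_edgeE[OF simple that] pos that
    by (metis inner_edge_mat_doubleton less_imp_le mult_nonneg_nonneg zero_le_square)
  ultimately have "w e * (x \<bullet> (edge_mat e *v x)) = 0" if "e \<in> E" for e
    using that by (simp add: sum_nonneg_eq_0_iff)
  then have edge_eq: "x $ i = x $ j" if "{i, j} \<in> E" for i j
    using pos that by (fastforce simp: inner_edge_mat_doubleton)
  have "x $ i = x $ j" for i j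
  proof -
    have "(i, j) \<in> {(u, v). {u, v} \<in> E}\<^sup>*" using conn by (simp add: graph_connected_def)
    then show ?thesis by induction (auto dest: edge_eq)
  qed
  then have "x = (x $ undefined) *\<^sub>R 1" by (simp add: vec_eq_iff)
  then show "\<exists>c. x = c *\<^sub>R 1" by blast
qed

lemma laplacian_perturbation_loewner:
  fixes E :: "'n::finite set set"
  assumes simple: "simple_graph E" and conn: "graph_connected E" and w0_pos: "\<forall>e\<in>E. 0 < w0 e"
    and lower: "\<forall>e\<in>E. w0 e - \<delta> e \<le> w e" and upper: "\<forall>e\<in>E. w e \<le> w0 e + \<delta> e"
  defines "a \<equiv> spec_norm (pinv (laplacian E w0) ** laplacian E \<delta>)"
  shows "loewner_le ((1 - a) *\<^sub>R laplacian E w0) (laplacian E w)"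
    and "loewner_le (laplacian E w) ((1 + a) *\<^sub>R laplacian E w0)"
proof -
  let ?L0 = "laplacian E w0" and ?\<Delta> = "laplacian E \<delta>"
  have \<Delta>_le: "loewner_le ?\<Delta> (a *\<^sub>R ?L0)"
    unfolding a_def
    by (rule loewner_le_spec_norm_pinv_mult[OF psd_kernel_ones_laplacian[OF simple conn w0_pos]
          transpose_laplacian[OF simple] laplacian_ones[OF simple]])
  have "loewner_le ((1 - a) *\<^sub>R ?L0) (?L0 - ?\<Delta>)"
    using loewner_le_diff_left[OF \<Delta>_le, of ?L0] by (simp add: scaleR_diff_left)
  also have "?L0 - ?\<Delta> = laplacian E (\<lambda>e. w0 e - \<delta> e)" by (simp add: laplacian_diff)
  also have "loewner_le \<dots> (laplacian E w)" by (rule loewner_le_laplacian[OF simple lower])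
  finally show "loewner_le ((1 - a) *\<^sub>R ?L0) (laplacian E w)" .
  have "loewner_le (laplacian E w) (laplacian E (\<lambda>e. w0 e + \<delta> e))"
    by (rule loewner_le_laplacian[OF simple upper])
  also have "laplacian E (\<lambda>e. w0 e + \<delta> e) = ?L0 + ?\<Delta>" by (simp add: laplacian_add)
  also have "loewner_le \<dots> (?L0 + a *\<^sub>R ?L0)" by (rule loewner_le_add_left[OF \<Delta>_le])
  also have "?L0 + a *\<^sub>R ?L0 = (1 + a) *\<^sub>R ?L0" by (simp add: scaleR_add_left)
  finally show "loewner_le (laplacian E w) ((1 + a) *\<^sub>R ?L0)" .
qed

theorem proposition3:
  fixes E :: "'n::finite set set"
    and w0 w alpha :: "'n set \<Rightarrow> real"
    and b :: real
  assumes simple: "simple_graph E"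
    and conn: "graph_connected E"
    and w0_pos: "\<forall>e\<in>E. 0 < w0 e"
    and alpha_range: "\<forall>e\<in>E. 0 \<le> alpha e \<and> alpha e < 1"
    and w_lower: "\<forall>e\<in>E. (1 - alpha e) * w0 e \<le> w e"
    and w_upper: "\<forall>e\<in>E. w e \<le> (1 + alpha e) * w0 e"
    and b_nz: "b \<noteq> 0"
    and a_lt1: "spec_norm (pinv (laplacian E w0) ** laplacian E (\<lambda>e. alpha e * w0 e)) < 1"
  shows
    "let L0 = laplacian E w0; L = laplacian E w;
         \<Delta> = laplacian E (\<lambda>e. alpha e * w0 e);
         a = spec_norm (pinv L0 ** \<Delta>);
         c = spec_norm (\<Delta> ** pinv L0);
         eps_minus = c / (1 + c); eps_plus = c / (1 - c);
         \<Sigma> = (b\<^sup>2 / 2) *\<^sub>R pinv L; \<Sigma>0 = (b\<^sup>2 / 2) *\<^sub>R pinv L0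
     in loewner_le ((1 - a) *\<^sub>R L0) L \<and> loewner_le L ((1 + a) *\<^sub>R L0) \<and>
        loewner_le ((1 - eps_minus) *\<^sub>R \<Sigma>0) \<Sigma> \<and> loewner_le \<Sigma> ((1 + eps_plus) *\<^sub>R \<Sigma>0)"
proof -
  define L0 L \<Delta> where "L0 = laplacian E w0" and "L = laplacian E w"
    and "\<Delta> = laplacian E (\<lambda>e. alpha e * w0 e)"
  define a where "a = spec_norm (pinv L0 ** \<Delta>)"
  define \<beta> where "\<beta> = b\<^sup>2 / 2"
  have "0 \<le> a" "a < 1" using spec_norm_nonneg a_lt1 by (simp_all add: a_def L0_def \<Delta>_def)
  have w_pos: "\<forall>e\<in>E. 0 < w e"
    using w0_pos alpha_range w_lower by (smt (verit) mult_pos_pos)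
  have K0: "psd_kernel_ones L0" and K: "psd_kernel_ones L"
    unfolding L0_def L_def using psd_kernel_ones_laplacian[OF simple conn] w0_pos w_pos by auto
  have L_bounds: "loewner_le ((1 - a) *\<^sub>R L0) L" "loewner_le L ((1 + a) *\<^sub>R L0)"
    using laplacian_perturbation_loewner[OF simple conn w0_pos, of "\<lambda>e. alpha e * w0 e" w]
      w_lower w_upper
    by (simp_all add: L0_def L_def \<Delta>_def a_def algebra_simps)
  note pinv_bounds = pinv_loewner_bounds[OF K0 K \<open>0 \<le> a\<close> \<open>a < 1\<close> L_bounds]
  have "\<Delta> ** pinv L0 = transpose (pinv L0 ** \<Delta>)"
    by (simp add: matrix_transpose_mul pinv_psd_kernel_ones(2)[OF K0] \<Delta>_def
        transpose_laplacian[OF simple])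
  then have c_eq_a: "spec_norm (\<Delta> ** pinv L0) = a" by (simp add: a_def spec_norm_transpose)
  have "1 - a / (1 + a) = inverse (1 + a)" "1 + a / (1 - a) = inverse (1 - a)"
    using \<open>0 \<le> a\<close> \<open>a < 1\<close> by (simp_all add: field_simps)
  with loewner_le_scaleR[of \<beta>, OF _ pinv_bounds(1)] loewner_le_scaleR[of \<beta>, OF _ pinv_bounds(2)]
  have \<Sigma>_bounds: "loewner_le ((1 - a / (1 + a)) *\<^sub>R (\<beta> *\<^sub>R pinv L0)) (\<beta> *\<^sub>R pinv L)"
      "loewner_le (\<beta> *\<^sub>R pinv L) ((1 + a / (1 - a)) *\<^sub>R (\<beta> *\<^sub>R pinv L0))"
    by (simp_all add: \<beta>_def mult.commute)
  show ?thesis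
    using L_bounds \<Sigma>_bounds c_eq_a
    unfolding Let_def L0_def[symmetric] L_def[symmetric] \<Delta>_def[symmetric] a_def[symmetric]
      \<beta>_def[symmetric]
    by simp
qed

end
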